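(* The convex hull $\hat\Omega_n$ of the spectral ball $\Omega_n$ equals $\{A\in\mathcal M_n: |\operatorname{tr}(A)|<n\}$.
   Context: $\mathcal M_n$ is the space of complex $n\times n$ matrices; $r(A)$ denotes the spectral radius of $A$; $\Omega_n=\{A\in\mathcal M_n: r(A)<1\}$; $\operatorname{tr}$ is the trace. *)

theory Defs
  imports "HOL-Analysis.Analysis"
begin

text \<open>Complex n x n matrices are rendered as complex^'n^'n, with n = CARD('n).
  The spectrum is the set of eigenvalues; the spectral radius is the maximal
  modulus of an eigenvalue (the spectrum of a complex square matrix is finite
  and nonempty).\<close>

definition mat_eigenvalues :: "complex^'n^'n \<Rightarrow> complex set" where
  "mat_eigenvalues A = {l. \<exists>v. v \<noteq> 0 \<and> A *v v = l *s v}"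

definition spectral_radius :: "complex^'n^'n \<Rightarrow> real" where
  "spectral_radius A = Max (cmod ` mat_eigenvalues A)"

definition spectral_ball :: "(complex^'n^'n) set" where
  "spectral_ball = {A. spectral_radius A < 1}"

end

theory Submission
  imports Defs "Jordan_Normal_Form.Schur_Decomposition"
begin

text \<open>After Schur triangularisation the trace of A is the sum of its n eigenvalues, so
  |tr A| \<le> n r(A); the right-hand side set is convex, hence contains the convex hull.
  Conversely write A = tI + B with t = tr A / n, so that |t| < 1 and tr B = 0. A trace-zero
  matrix is a sum of square-zero matrices N, and tI + rN has spectrum {t} for every real r:
  the whole line through tI in direction N lies in the spectral ball. The directions of lines
  through a point of a convex set that stay inside the set form a linear subspace, so B is such
  a direction for the convex hull, and in particular tI + B = A lies in it.\<close>

no_notation vec_index (infixl "$" 100)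

subsection \<open>Transfer to the matrices of Jordan_Normal_Form\<close>

definition vec_of_cart :: "(nat \<Rightarrow> 'n::finite) \<Rightarrow> 'a^'n \<Rightarrow> 'a Matrix.vec" where
  "vec_of_cart h v = Matrix.vec CARD('n) (\<lambda>i. v $ h i)"

definition mat_of_cart :: "(nat \<Rightarrow> 'n::finite) \<Rightarrow> 'a^'n^'n \<Rightarrow> 'a Matrix.mat" where
  "mat_of_cart h A = Matrix.mat CARD('n) CARD('n) (\<lambda>(i, j). A $ h i $ h j)"

lemma vec_of_cart_carrier [simp]: "vec_of_cart h (v :: 'a^'n) \<in> carrier_vec CARD('n)"
  by (simp add: vec_of_cart_def)

lemma mat_of_cart_carrier [simp]: "mat_of_cart h (A :: 'a^'n^'n) \<in> carrier_mat CARD('n) CARD('n)"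
  by (simp add: mat_of_cart_def)

lemma dim_row_mat_of_cart [simp]: "dim_row (mat_of_cart h (A :: 'a^'n^'n)) = CARD('n)"
  by (simp add: mat_of_cart_def)

lemma vec_of_cart_zero: "vec_of_cart h (0 :: 'a::zero^'n) = 0\<^sub>v CARD('n)"
  by (auto simp: vec_of_cart_def)

lemma vec_of_cart_smult: "vec_of_cart h (c *s v) = c \<cdot>\<^sub>v vec_of_cart h v"
  by (auto simp: vec_of_cart_def)

context
  fixes h :: "nat \<Rightarrow> 'n::finite"
  assumes h: "bij_betw h {0..<CARD('n)} UNIV"
begin

lemma vec_of_cart_inject: "vec_of_cart h v = vec_of_cart h w \<longleftrightarrow> v = w"
proof
  assume eq: "vec_of_cart h v = vec_of_cart h w"
  show "v = w"
  proof (rule Finite_Cartesian_Product.vec_eq_iff[THEN iffD2], intro allI)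
    fix k
    obtain i where "i < CARD('n)" "k = h i"
      using h by (metis UNIV_I atLeastLessThan_iff bij_betw_iff_bijections)
    then show "v $ k = w $ k"
      using eq by (metis vec_of_cart_def index_vec)
  qed
qed simp

lemma vec_of_cart_surj:
  assumes "u \<in> carrier_vec CARD('n)"
  obtains v where "u = vec_of_cart h v"
proof
  define g where "g = inv_into {0..<CARD('n)} h"
  have "g (h i) = i" if "i < CARD('n)" for i
    using h that unfolding g_def by (simp add: bij_betw_inv_into_left)
  then show "u = vec_of_cart h (\<chi> k. vec_index u (g k))"
    using assms by (intro eq_vecI) (auto simp: vec_of_cart_def)
qed

lemma mult_mat_of_cart_vec_of_cart:
  "mat_of_cart h A *\<^sub>v vec_of_cart h v = vec_of_cart h (A *v v)"
proof (rule eq_vecI)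
  fix i assume "i < dim_vec (vec_of_cart h (A *v v))"
  then have i: "i < CARD('n)" by (simp add: vec_of_cart_def)
  have "vec_index (mat_of_cart h A *\<^sub>v vec_of_cart h v) i
      = (\<Sum>j = 0..<CARD('n). A $ h i $ h j * v $ h j)"
    using i by (simp add: mat_of_cart_def vec_of_cart_def scalar_prod_def)
  also have "\<dots> = (\<Sum>k\<in>UNIV. A $ h i $ k * v $ k)"
    by (rule sum.reindex_bij_betw[OF h])
  finally show "vec_index (mat_of_cart h A *\<^sub>v vec_of_cart h v) i
      = vec_index (vec_of_cart h (A *v v)) i"
    using i by (simp add: vec_of_cart_def matrix_vector_mult_def)
qed (simp add: mat_of_cart_def vec_of_cart_def)

lemma eigenvalue_mat_of_cart_iff:
  "eigenvalue (mat_of_cart h A) e \<longleftrightarrow> e \<in> mat_eigenvalues A"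
proof -
  have eigenvector_iff:
    "eigenvector (mat_of_cart h A) (vec_of_cart h v) e \<longleftrightarrow> v \<noteq> 0 \<and> A *v v = e *s v" for v
  proof -
    have "vec_of_cart h v = 0\<^sub>v CARD('n) \<longleftrightarrow> vec_of_cart h v = vec_of_cart h 0"
      by (simp only: vec_of_cart_zero)
    moreover have "mat_of_cart h A *\<^sub>v vec_of_cart h v = e \<cdot>\<^sub>v vec_of_cart h v \<longleftrightarrow>
        vec_of_cart h (A *v v) = vec_of_cart h (e *s v)"
      by (simp only: mult_mat_of_cart_vec_of_cart vec_of_cart_smult)
    ultimately show ?thesis
      by (simp only: eigenvector_def dim_row_mat_of_cart vec_of_cart_inject vec_of_cart_carrier
          simp_thms)
  qed
  show ?thesis
  proof
    assume "eigenvalue (mat_of_cart h A) e"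
    then obtain u where u: "eigenvector (mat_of_cart h A) u e"
      unfolding eigenvalue_def by blast
    then have "u \<in> carrier_vec CARD('n)"
      by (simp add: eigenvector_def)
    then obtain v where "u = vec_of_cart h v"
      by (rule vec_of_cart_surj)
    with u have "v \<noteq> 0 \<and> A *v v = e *s v"
      by (simp add: eigenvector_iff)
    then show "e \<in> mat_eigenvalues A"
      by (auto simp: mat_eigenvalues_def)
  next
    assume "e \<in> mat_eigenvalues A"
    then obtain v where "v \<noteq> 0" "A *v v = e *s v"
      by (auto simp: mat_eigenvalues_def)
    then have "eigenvector (mat_of_cart h A) (vec_of_cart h v) e"
      by (simp add: eigenvector_iff)
    then show "eigenvalue (mat_of_cart h A) e"
      unfolding eigenvalue_def ..
  qed
qed

lemma trace_eq_sum_diag_mat_of_cart: "trace A = sum_list (diag_mat (mat_of_cart h A))"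
proof -
  have "trace A = (\<Sum>i = 0..<CARD('n). A $ h i $ h i)"
    unfolding trace_def by (rule sum.reindex_bij_betw[OF h, symmetric])
  then show ?thesis
    by (simp add: diag_mat_def mat_of_cart_def sum_list_sum_nth)
qed

end

subsection \<open>Trace and eigenvalues\<close>

lemma sum_diag_mat_mult_commute:
  fixes A :: "'a::comm_semiring_0 Matrix.mat"
  assumes "A \<in> carrier_mat n m" "B \<in> carrier_mat m n"
  shows "sum_list (diag_mat (A * B)) = sum_list (diag_mat (B * A))"
proof -
  have "sum_list (diag_mat (A * B)) = (\<Sum>i = 0..<n. \<Sum>k = 0..<m. A $$ (i, k) * B $$ (k, i))"
    using assms by (simp add: diag_mat_def sum_list_sum_nth scalar_prod_def)
  also have "\<dots> = (\<Sum>k = 0..<m. \<Sum>i = 0..<n. B $$ (k, i) * A $$ (i, k))"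
    by (subst sum.swap) (simp add: mult.commute)
  also have "\<dots> = sum_list (diag_mat (B * A))"
    using assms by (simp add: diag_mat_def sum_list_sum_nth scalar_prod_def)
  finally show ?thesis .
qed

lemma sum_diag_mat_eq_sum_eigenvalues:
  fixes M :: "complex Matrix.mat"
  assumes M: "M \<in> carrier_mat n n"
  obtains es where "length es = n" "set es = Collect (eigenvalue M)"
    "sum_list (diag_mat M) = sum_list es"
proof -
  obtain es where es: "char_poly M = (\<Prod>a\<leftarrow>es. [:- a, 1:])" "length es = n"
    using char_poly_factorized[OF M] by blast
  obtain B P Q where "schur_decomposition M es = (B, P, Q)"
    by (cases "schur_decomposition M es")
  from schur_decomposition[OF M es(1) this]
  have sim: "similar_mat_wit M B P Q" and diag: "diag_mat B = es"
    by auto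
  note wit = similar_mat_witD2[OF M sim]
  have "set es = Collect (eigenvalue M)"
    using eigenvalue_root_char_poly[OF M] by (auto simp: es(1) poly_prod_list_zero_iff)
  moreover have "sum_list (diag_mat M) = sum_list es"
  proof -
    have "sum_list (diag_mat M) = sum_list (diag_mat (P * (B * Q)))"
      using wit by (simp add: assoc_mult_mat[of P n n B n Q n])
    also have "\<dots> = sum_list (diag_mat ((B * Q) * P))"
      using wit by (intro sum_diag_mat_mult_commute) auto
    also have "(B * Q) * P = B"
      using wit by (simp add: assoc_mult_mat[of B n n Q n P n])
    finally show ?thesis
      by (simp add: diag)
  qed
  ultimately show ?thesis
    using es(2) that by blast
qed

lemma obtain_cart_index_enumeration:
  obtains h :: "nat \<Rightarrow> 'n::finite" where "bij_betw h {0..<CARD('n)} UNIV"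
  using ex_bij_betw_nat_finite[of "UNIV :: 'n set"] by auto

lemma trace_eq_sum_mat_eigenvalues:
  fixes A :: "complex^'n^'n"
  obtains es where "length es = CARD('n)" "set es = mat_eigenvalues A" "trace A = sum_list es"
proof -
  obtain h :: "nat \<Rightarrow> 'n" where h: "bij_betw h {0..<CARD('n)} UNIV"
    by (rule obtain_cart_index_enumeration)
  obtain es where "length es = CARD('n)" "set es = Collect (eigenvalue (mat_of_cart h A))"
    "sum_list (diag_mat (mat_of_cart h A)) = sum_list es"
    by (rule sum_diag_mat_eq_sum_eigenvalues[OF mat_of_cart_carrier])
  moreover have "Collect (eigenvalue (mat_of_cart h A)) = mat_eigenvalues A"
    using eigenvalue_mat_of_cart_iff[OF h] by blast
  ultimately show ?thesis
    using that trace_eq_sum_diag_mat_of_cart[OF h] by metis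
qed

lemma finite_mat_eigenvalues: "finite (mat_eigenvalues (A :: complex^'n^'n))"
  by (metis finite_set trace_eq_sum_mat_eigenvalues)

lemma norm_le_spectral_radius:
  assumes "e \<in> mat_eigenvalues A"
  shows "cmod e \<le> spectral_radius A"
  unfolding spectral_radius_def using assms finite_mat_eigenvalues by (intro Max_ge) auto

lemma norm_trace_le_spectral_radius:
  fixes A :: "complex^'n^'n"
  shows "cmod (trace A) \<le> CARD('n) * spectral_radius A"
proof -
  obtain es where es: "length es = CARD('n)" "set es = mat_eigenvalues A" "trace A = sum_list es"
    by (rule trace_eq_sum_mat_eigenvalues)
  have "cmod (trace A) = cmod (\<Sum>i = 0..<CARD('n). es ! i)"
    by (simp add: es(1,3) sum_list_sum_nth)
  also have "\<dots> \<le> (\<Sum>i = 0..<CARD('n). cmod (es ! i))"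
    by (rule norm_sum)
  also have "\<dots> \<le> (\<Sum>i = 0..<CARD('n). spectral_radius A)"
    using es(1,2) by (intro sum_mono norm_le_spectral_radius) auto
  finally show ?thesis
    by simp
qed

subsection \<open>Scalar plus square-zero matrices\<close>

abbreviation scalar_mat :: "'a::zero \<Rightarrow> 'a^'n^'n" where
  "scalar_mat \<equiv> Finite_Cartesian_Product.mat"

lemma scalar_mat_mult_vector: "scalar_mat t *v v = t *s (v :: 'a::semiring_1^'n)"
proof -
  have "(\<Sum>j\<in>UNIV. (if i = j then t else 0) * v $ j) = t * v $ i" for i
    by (simp add: if_distrib[of "\<lambda>x. x * _"] cong: if_cong)
  then show ?thesis
    by (simp add: Finite_Cartesian_Product.vec_eq_iff matrix_vector_mult_def
        Finite_Cartesian_Product.mat_def)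
qed

lemma trace_scalar_mat: "trace (scalar_mat t :: 'a::semiring_1^'n^'n) = of_nat CARD('n) * t"
  by (simp add: trace_def Finite_Cartesian_Product.mat_def)

lemma mat_eigenvalues_scalar_plus_square_zero:
  fixes N :: "complex^'n^'n"
  assumes N: "N ** N = 0"
  shows "mat_eigenvalues (scalar_mat t + N) = {t}"
proof (intro equalityI subsetI)
  fix l assume "l \<in> mat_eigenvalues (scalar_mat t + N)"
  then obtain v where v: "v \<noteq> 0" "(scalar_mat t + N) *v v = l *s v"
    unfolding mat_eigenvalues_def by auto
  then have Nv: "N *v v = (l - t) *s v"
    by (simp add: scalar_mat_mult_vector algebra_simps Finite_Cartesian_Product.vec_eq_iff)
  have "0 = (N ** N) *v v"
    using N by simp
  also have "\<dots> = ((l - t) * (l - t)) *s v"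
    by (simp only: matrix_vector_mul_assoc[symmetric] Nv vector_scalar_commute vector_smult_assoc)
  finally show "l \<in> {t}"
    using v(1) by simp
next
  fix l assume "l \<in> {t}"
  have "\<exists>v. v \<noteq> 0 \<and> N *v v = 0"
  proof (cases "\<exists>w. N *v w \<noteq> 0")
    case True
    then obtain w where "N *v w \<noteq> 0" by blast
    moreover have "N *v (N *v w) = 0"
      using N by (simp add: matrix_vector_mul_assoc)
    ultimately show ?thesis by blast
  next
    case False
    then show ?thesis
      by (intro exI[of _ 1]) simp
  qed
  then obtain v where "v \<noteq> 0" "N *v v = 0"
    by blast
  moreover have "(scalar_mat t + N) *v v = scalar_mat t *v v + N *v v"
    by (rule matrix_vector_mult_add_rdistrib)
  ultimately have "v \<noteq> 0" "(scalar_mat t + N) *v v = t *s v"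
    by (simp_all add: scalar_mat_mult_vector)
  then show "l \<in> mat_eigenvalues (scalar_mat t + N)"
    using \<open>l \<in> {t}\<close> by (auto simp: mat_eigenvalues_def)
qed

lemma scalar_plus_square_zero_in_spectral_ball:
  fixes N :: "complex^'n^'n"
  assumes "N ** N = 0" "cmod t < 1"
  shows "scalar_mat t + N \<in> spectral_ball"
  using assms
  by (simp add: spectral_ball_def spectral_radius_def mat_eigenvalues_scalar_plus_square_zero)

subsection \<open>Trace-zero matrices\<close>

definition outer_mat :: "('n \<Rightarrow> 'a::times) \<Rightarrow> ('n \<Rightarrow> 'a) \<Rightarrow> 'a^'n^'n" where
  "outer_mat x y = (\<chi> i j. x i * y j)"

definition single_entry_mat :: "'n \<Rightarrow> 'n \<Rightarrow> 'a::zero \<Rightarrow> 'a^'n^'n" where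
  "single_entry_mat a b c = (\<chi> i j. if i = a \<and> j = b then c else 0)"

lemma outer_mat_square_zero:
  fixes x y :: "'n::finite \<Rightarrow> 'a::comm_semiring_1"
  assumes "(\<Sum>k\<in>UNIV. y k * x k) = 0"
  shows "outer_mat x y ** outer_mat x y = 0"
proof -
  have "(\<Sum>k\<in>UNIV. x i * y k * (x k * y j)) = x i * y j * (\<Sum>k\<in>UNIV. y k * x k)" for i j
    by (simp add: sum_distrib_left algebra_simps)
  then show ?thesis
    using assms
    by (simp add: Finite_Cartesian_Product.vec_eq_iff matrix_matrix_mult_def outer_mat_def)
qed

lemma single_entry_mat_square_zero:
  assumes "a \<noteq> b"
  shows "single_entry_mat a b c ** single_entry_mat a b (c :: 'a::semiring_1) = 0"
  using assms
  by (simp add: Finite_Cartesian_Product.vec_eq_iff matrix_matrix_mult_def single_entry_mat_def)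

lemma single_entry_mat_diff_in_span_square_zero:
  fixes c :: "'a::{comm_ring_1, real_vector}"
  shows "single_entry_mat a a c - single_entry_mat i i c \<in> span {N :: 'a^'n^'n. N ** N = 0}"
proof (cases "a = i")
  case True
  then show ?thesis by (simp add: span_zero)
next
  case False
  define x where "x k = (if k = a then c else if k = i then - c else 0)" for k
  define y :: "'n \<Rightarrow> 'a" where "y k = (if k = a \<or> k = i then 1 else 0)" for k
  have "(\<Sum>k\<in>UNIV. y k * x k)
      = (\<Sum>k\<in>UNIV. (if k = a then c else 0) + (if k = i then - c else 0))"
    using False by (intro sum.cong) (auto simp: x_def y_def)
  then have "(\<Sum>k\<in>UNIV. y k * x k) = 0"
    by (simp add: sum.distrib)
  then have "outer_mat x y \<in> span {N. N ** N = 0}"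
    by (intro span_base) (simp add: outer_mat_square_zero)
  moreover have "single_entry_mat i a c \<in> span {N. N ** N = 0}"
    and "single_entry_mat a i (- c) \<in> span {N. N ** N = 0}"
    using False by (auto intro: span_base simp: single_entry_mat_square_zero)
  moreover have "single_entry_mat a a c - single_entry_mat i i c
      = outer_mat x y + single_entry_mat i a c + single_entry_mat a i (- c)"
    using False
    by (simp add: Finite_Cartesian_Product.vec_eq_iff outer_mat_def single_entry_mat_def x_def y_def)
  ultimately show ?thesis
    by (simp add: span_add)
qed

lemma sum_single_entry_mat:
  "(\<Sum>k\<in>K. single_entry_mat a b (f k)) = single_entry_mat a b (sum f K)"
  by (induction K rule: infinite_finite_induct)
    (auto simp: single_entry_mat_def Finite_Cartesian_Product.vec_eq_iff)

lemma sum_single_entry_mat_entries: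
  "(\<Sum>a\<in>UNIV. \<Sum>b\<in>UNIV. single_entry_mat a b (B $ a $ b)) = (B :: 'a::comm_monoid_add^'n^'n)"
proof -
  have "(\<Sum>a\<in>UNIV. \<Sum>b\<in>UNIV. if i = a \<and> j = b then B $ a $ b else 0) = B $ i $ j" for i j
  proof -
    have "(\<Sum>a\<in>UNIV. \<Sum>b\<in>UNIV. if i = a \<and> j = b then B $ a $ b else 0)
        = (\<Sum>a\<in>UNIV. if i = a then B $ a $ j else 0)"
      by (intro sum.cong) auto
    then show ?thesis
      by simp
  qed
  then show ?thesis
    by (simp add: single_entry_mat_def Finite_Cartesian_Product.vec_eq_iff)
qed

lemma trace_zero_in_span_square_zero:
  fixes B :: "'a::{comm_ring_1, real_vector}^'n^'n"
  assumes "trace B = 0"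
  shows "B \<in> span {N. N ** N = 0}"
proof -
  fix i :: 'n
  \<comment> \<open>B = (sum over a \<noteq> b of B_ab E_ab) + (sum over a of B_aa (E_aa - E_ii)) + (tr B) E_ii\<close>
  define F where "F a b = single_entry_mat a b (B $ a $ b)
    - (if a = b then single_entry_mat i i (B $ a $ b) else 0)" for a b
  have "(\<Sum>a\<in>UNIV. \<Sum>b\<in>UNIV. F a b)
      = (\<Sum>a\<in>UNIV. \<Sum>b\<in>UNIV. single_entry_mat a b (B $ a $ b))
      - (\<Sum>a\<in>UNIV. \<Sum>b\<in>UNIV. if a = b then single_entry_mat i i (B $ a $ b) else 0)"
    by (simp add: F_def sum_subtractf)
  also have "\<dots> = B - single_entry_mat i i (trace B)"
    by (simp add: sum_single_entry_mat_entries sum_single_entry_mat trace_def)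
  also have "\<dots> = B"
    using assms by (simp add: single_entry_mat_def Finite_Cartesian_Product.vec_eq_iff)
  finally have "B = (\<Sum>a\<in>UNIV. \<Sum>b\<in>UNIV. F a b)" ..
  also have "\<dots> \<in> span {N. N ** N = 0}"
    by (intro span_sum)
      (auto simp: F_def span_zero intro: span_base single_entry_mat_square_zero
        single_entry_mat_diff_in_span_square_zero)
  finally show ?thesis .
qed

subsection \<open>Lines through a point of a convex set\<close>

definition line_directions :: "'a::real_vector set \<Rightarrow> 'a \<Rightarrow> 'a set" where
  "line_directions C x = {v. \<forall>r::real. x + r *\<^sub>R v \<in> C}"

lemma subspace_line_directions:
  assumes "convex C" "x \<in> C"
  shows "real_vector.subspace (line_directions C x)"
  unfolding real_vector.subspace_def
proof (intro conjI ballI allI)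
  show "0 \<in> line_directions C x"
    using assms(2) by (simp add: line_directions_def)
next
  fix v w assume v: "v \<in> line_directions C x" and w: "w \<in> line_directions C x"
  show "v + w \<in> line_directions C x"
    unfolding line_directions_def
  proof (intro CollectI allI)
    fix r :: real
    have "(1/2) *\<^sub>R (x + (2 * r) *\<^sub>R v) + (1/2) *\<^sub>R (x + (2 * r) *\<^sub>R w) \<in> C"
      using v w by (intro convexD[OF assms(1)]) (auto simp: line_directions_def)
    then show "x + r *\<^sub>R (v + w) \<in> C"
      by (simp add: algebra_simps flip: scaleR_add_left)
  qed
next
  fix c :: real and v assume "v \<in> line_directions C x"
  then show "c *\<^sub>R v \<in> line_directions C x"
    by (simp add: line_directions_def)
qed

lemma linear_trace: "linear (trace :: 'a::{comm_ring_1, real_vector}^'n^'n \<Rightarrow> 'a)"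
  by (rule linearI) (simp_all add: trace_add trace_def scaleR_sum_right)

lemma convex_norm_trace_less:
  "convex {A :: 'a::{comm_ring_1, real_normed_vector}^'n^'n. norm (trace A) < r}"
proof -
  have "{A :: 'a^'n^'n. norm (trace A) < r} = trace -` ball 0 r"
    by auto
  then show ?thesis
    using convex_linear_vimage[OF linear_trace convex_ball] by simp
qed

lemma square_zero_in_line_directions:
  fixes N :: "complex^'n^'n"
  assumes "N ** N = 0" "cmod t < 1"
  shows "N \<in> line_directions (convex hull spectral_ball) (scalar_mat t)"
proof -
  have "(r *\<^sub>R N) ** (r *\<^sub>R N) = 0" for r :: real
    using assms(1) by (simp flip: scalar_matrix_assoc add: matrix_scalar_ac)
  then show ?thesis
    using assms(2)
    by (auto simp: line_directions_def intro: hull_inc scalar_plus_square_zero_in_spectral_ball)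
qed

lemma norm_trace_less_card_if_spectral_ball:
  fixes A :: "complex^'n^'n"
  assumes "A \<in> spectral_ball"
  shows "cmod (trace A) < real CARD('n)"
proof -
  have "cmod (trace A) \<le> CARD('n) * spectral_radius A"
    by (rule norm_trace_le_spectral_radius)
  also have "\<dots> < real CARD('n) * 1"
    using assms by (intro mult_strict_left_mono) (simp_all add: spectral_ball_def)
  finally show ?thesis
    by simp
qed

lemma in_convex_hull_spectral_ball_if_norm_trace_less:
  fixes A :: "complex^'n^'n"
  assumes A: "cmod (trace A) < real CARD('n)"
  shows "A \<in> convex hull spectral_ball"
proof -
  define t where "t = trace A / of_nat CARD('n)"
  let ?C = "convex hull (spectral_ball :: (complex^'n^'n) set)"
  have "cmod t = cmod (trace A) / real CARD('n)"
    by (simp add: t_def norm_divide)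
  with A have t: "cmod t < 1"
    by simp
  have "scalar_mat t \<in> ?C"
    using scalar_plus_square_zero_in_spectral_ball[of "0 :: complex^'n^'n" t] t
    by (intro hull_inc) simp
  then have "real_vector.subspace (line_directions ?C (scalar_mat t))"
    by (simp add: subspace_line_directions)
  moreover have "{N. N ** N = 0} \<subseteq> line_directions ?C (scalar_mat t)"
    using square_zero_in_line_directions t by blast
  moreover have "trace (A - scalar_mat t) = 0"
    by (simp add: trace_sub trace_scalar_mat t_def)
  ultimately have "A - scalar_mat t \<in> line_directions ?C (scalar_mat t)"
    using span_minimal trace_zero_in_span_square_zero by blast
  then have "scalar_mat t + 1 *\<^sub>R (A - scalar_mat t) \<in> ?C"
    unfolding line_directions_def by blast
  then show ?thesis
    by simp
qed

theorem proposition4: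
  shows "convex hull (spectral_ball :: (complex^'n^'n) set)
           = {A :: complex^'n^'n. cmod (trace A) < real CARD('n)}"
proof (rule antisym)
  show "convex hull spectral_ball \<subseteq> {A :: complex^'n^'n. cmod (trace A) < real CARD('n)}"
    using norm_trace_less_card_if_spectral_ball
    by (intro hull_minimal convex_norm_trace_less) blast
  show "{A :: complex^'n^'n. cmod (trace A) < real CARD('n)} \<subseteq> convex hull spectral_ball"
    using in_convex_hull_spectral_ball_if_norm_trace_less by blast
qed

end
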